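(* Assume $\lambda_A>0$. Run TD-SVRG with i.i.d. sampling (Algorithm 3) with learning rate $\alpha=1/16$, inner-loop length $M=32/\lambda_A$ (assumed integer), a parameter $c>0$, and in epoch $m\ge1$ an estimation batch size $$n_m=\Big\lceil\frac{4f_e(\tilde\theta_{m-1})+2\sigma^2}{c\,\lambda_A\,(2/3)^{m}}\Big\rceil,\qquad \sigma^2=\sum_{s,s'}\mu(s)P(s,s')\|g_{s,s'}(\theta^* )\|^2.$$ Then there is a constant $C_1$ (independent of $m$) such that for every $m\ge0$, $$\mathbb E[f_e(\tilde\theta_m)]\le\left(\tfrac23\right)^m\big(f_e(\tilde\theta_0)+C_1\big).$$
   Context: Environment setting. Let $\mathcal S$ be a finite state space, $P$ an irreducible aperiodic transition matrix on $\mathcal S$ (induced by a fixed policy) with stationary distribution $\mu$, $\phi:\mathcal S\to\mathbb R^d$ a feature map with $\|\phi(s)\|_2\le1$ for all $s$, $r:\mathcal S\times\mathcal S\to\mathbb R$ a reward function and $\gamma\in[0,1)$. For states $s,s'$ and $\theta\in\mathbb R^d$ let $g_{s,s'}(\theta)=(r(s,s')+\gamma\phi(s')^T\theta-\phi(s)^T\theta)\phi(s)$. Let $A_e=\sum_{s,s'}\mu(s)P(s,s')\phi(s)(\phi(s)-\gamma\phi(s'))^T$ and $b_e=\sum_{s,s'}\mu(s)P(s,s')r(s,s')\phi(s)$; assume $A_e$ is nonsingular and let $\theta^*=A_e^{-1}b_e$. Let $\lambda_A$ be the minimum eigenvalue of $(A_e+A_e^T)/2$. Define $f_e(\theta)=(\theta-\theta^*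 )^TA_e(\theta-\theta^* )$. An i.i.d. sample is a pair $(s,s')$ with $s\sim\mu$ and then $s'\sim P(s,\cdot)$, drawn independently of all other samples. Algorithm 3 (TD-SVRG, i.i.d. sampling): given $\alpha>0$, integer $M\ge1$, batch sizes $n_m$ and initial $\tilde\theta_0$, for epochs $m=1,2,\dots$: set $\tilde\theta=\tilde\theta_{m-1}$; draw $n_m$ i.i.d. samples forming $\mathcal D^m$ and compute $g_m(\tilde\theta)=\frac1{n_m}\sum_{(s,s')\in\mathcal D^m}g_{s,s'}(\tilde\theta)$; set $\theta_0=\tilde\theta$; for $t=1,\dots,M$ draw a fresh i.i.d. sample $(s,s')$, put $v_t=g_{s,s'}(\theta_{t-1})-g_{s,s'}(\tilde\theta)+g_m(\tilde\theta)$, $\theta_t=\theta_{t-1}+\alpha v_t$; finally set $\tilde\theta_m=\theta_{t'}$ with $t'$ uniform on $\{0,\dots,M-1\}$, independent. *)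

theory Defs
  imports "HOL-Analysis.Analysis" "HOL-Probability.Probability"
begin

fun n_step :: "('s \<Rightarrow> 's pmf) \<Rightarrow> nat \<Rightarrow> 's \<Rightarrow> 's pmf" where
  "n_step P 0 s = return_pmf s"
| "n_step P (Suc n) s = bind_pmf (n_step P n s) P"

definition irreducible_chain :: "('s \<Rightarrow> 's pmf) \<Rightarrow> bool" where
  "irreducible_chain P = (\<forall>s t. \<exists>n. pmf (n_step P n s) t > 0)"

definition aperiodic_chain :: "('s \<Rightarrow> 's pmf) \<Rightarrow> bool" where
  "aperiodic_chain P = (\<forall>s. Gcd {n. 0 < n \<and> pmf (n_step P n s) s > 0} = (1::nat))"

definition stationary_dist :: "'s pmf \<Rightarrow> ('s \<Rightarrow> 's pmf) \<Rightarrow> bool" where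
  "stationary_dist \<mu> P = (bind_pmf \<mu> P = \<mu>)"

definition sample_pmf :: "'s pmf \<Rightarrow> ('s \<Rightarrow> 's pmf) \<Rightarrow> ('s \<times> 's) pmf" where
  "sample_pmf \<mu> P = bind_pmf \<mu> (\<lambda>s. map_pmf (\<lambda>s'. (s, s')) (P s))"

definition td_g :: "('s \<Rightarrow> 's \<Rightarrow> real) \<Rightarrow> real \<Rightarrow> ('s \<Rightarrow> real^'d) \<Rightarrow> 's \<Rightarrow> 's \<Rightarrow> real^'d \<Rightarrow> real^'d" where
  "td_g r \<gamma> \<phi> s s' \<theta> = (r s s' + \<gamma> * (\<phi> s' \<bullet> \<theta>) - \<phi> s \<bullet> \<theta>) *\<^sub>R \<phi> s"

definition outer_prod :: "real^'d \<Rightarrow> real^'d \<Rightarrow> real^'d^'d" where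
  "outer_prod u v = (\<chi> i j. u $ i * v $ j)"

definition A_e :: "('s::finite) pmf \<Rightarrow> ('s \<Rightarrow> 's pmf) \<Rightarrow> ('s \<Rightarrow> real^'d) \<Rightarrow> real \<Rightarrow> real^'d^'d" where
  "A_e \<mu> P \<phi> \<gamma> = (\<Sum>s\<in>UNIV. \<Sum>s'\<in>UNIV.
      (pmf \<mu> s * pmf (P s) s') *\<^sub>R outer_prod (\<phi> s) (\<phi> s - \<gamma> *\<^sub>R \<phi> s'))"

definition b_e :: "('s::finite) pmf \<Rightarrow> ('s \<Rightarrow> 's pmf) \<Rightarrow> ('s \<Rightarrow> 's \<Rightarrow> real) \<Rightarrow> ('s \<Rightarrow> real^'d) \<Rightarrow> real^'d" where
  "b_e \<mu> P r \<phi> = (\<Sum>s\<in>UNIV. \<Sum>s'\<in>UNIV. (pmf \<mu> s * pmf (P s) s' * r s s') *\<^sub>R \<phi> s)"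

definition theta_star :: "('s::finite) pmf \<Rightarrow> ('s \<Rightarrow> 's pmf) \<Rightarrow> ('s \<Rightarrow> 's \<Rightarrow> real) \<Rightarrow> ('s \<Rightarrow> real^'d) \<Rightarrow> real \<Rightarrow> real^'d" where
  "theta_star \<mu> P r \<phi> \<gamma> = matrix_inv (A_e \<mu> P \<phi> \<gamma>) *v b_e \<mu> P r \<phi>"

definition min_eigenvalue :: "real^'d^'d \<Rightarrow> real" where
  "min_eigenvalue S = Min {l. \<exists>v. v \<noteq> 0 \<and> S *v v = l *\<^sub>R v}"

definition lambda_A :: "('s::finite) pmf \<Rightarrow> ('s \<Rightarrow> 's pmf) \<Rightarrow> ('s \<Rightarrow> real^'d) \<Rightarrow> real \<Rightarrow> real" where
  "lambda_A \<mu> P \<phi> \<gamma> =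
     min_eigenvalue ((1/2) *\<^sub>R (A_e \<mu> P \<phi> \<gamma> + transpose (A_e \<mu> P \<phi> \<gamma>)))"

definition f_e :: "('s::finite) pmf \<Rightarrow> ('s \<Rightarrow> 's pmf) \<Rightarrow> ('s \<Rightarrow> 's \<Rightarrow> real) \<Rightarrow> ('s \<Rightarrow> real^'d) \<Rightarrow> real \<Rightarrow> real^'d \<Rightarrow> real" where
  "f_e \<mu> P r \<phi> \<gamma> \<theta> =
     (\<theta> - theta_star \<mu> P r \<phi> \<gamma>) \<bullet> (A_e \<mu> P \<phi> \<gamma> *v (\<theta> - theta_star \<mu> P r \<phi> \<gamma>))"

definition sigma_sq :: "('s::finite) pmf \<Rightarrow> ('s \<Rightarrow> 's pmf) \<Rightarrow> ('s \<Rightarrow> 's \<Rightarrow> real) \<Rightarrow> ('s \<Rightarrow> real^'d) \<Rightarrow> real \<Rightarrow> real" where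
  "sigma_sq \<mu> P r \<phi> \<gamma> = (\<Sum>s\<in>UNIV. \<Sum>s'\<in>UNIV.
      pmf \<mu> s * pmf (P s) s' * (norm (td_g r \<gamma> \<phi> s s' (theta_star \<mu> P r \<phi> \<gamma>)))\<^sup>2)"

fun iid_samples :: "'a pmf \<Rightarrow> nat \<Rightarrow> 'a list pmf" where
  "iid_samples D 0 = return_pmf []"
| "iid_samples D (Suc n) = bind_pmf D (\<lambda>x. map_pmf (\<lambda>xs. x # xs) (iid_samples D n))"

definition batch_grad :: "('s \<Rightarrow> 's \<Rightarrow> real) \<Rightarrow> real \<Rightarrow> ('s \<Rightarrow> real^'d) \<Rightarrow> ('s \<times> 's) list \<Rightarrow> real^'d \<Rightarrow> real^'d" where
  "batch_grad r \<gamma> \<phi> xs \<theta> =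
     (1 / real (length xs)) *\<^sub>R sum_list (map (\<lambda>(s, s'). td_g r \<gamma> \<phi> s s' \<theta>) xs)"

fun inner_iter :: "('s \<times> 's) pmf \<Rightarrow> ('s \<Rightarrow> 's \<Rightarrow> real) \<Rightarrow> real \<Rightarrow> ('s \<Rightarrow> real^'d) \<Rightarrow> real
     \<Rightarrow> real^'d \<Rightarrow> real^'d \<Rightarrow> nat \<Rightarrow> (real^'d) pmf" where
  "inner_iter D r \<gamma> \<phi> \<alpha> \<theta>t gm 0 = return_pmf \<theta>t"
| "inner_iter D r \<gamma> \<phi> \<alpha> \<theta>t gm (Suc t) =
     bind_pmf (inner_iter D r \<gamma> \<phi> \<alpha> \<theta>t gm t) (\<lambda>\<theta>.
       map_pmf (\<lambda>(s, s'). \<theta> + \<alpha> *\<^sub>R (td_g r \<gamma> \<phi> s s' \<theta> - td_g r \<gamma> \<phi> s s' \<theta>t + gm)) D)"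

definition svrg_epoch :: "('s \<times> 's) pmf \<Rightarrow> ('s \<Rightarrow> 's \<Rightarrow> real) \<Rightarrow> real \<Rightarrow> ('s \<Rightarrow> real^'d) \<Rightarrow> real
     \<Rightarrow> nat \<Rightarrow> nat \<Rightarrow> real^'d \<Rightarrow> (real^'d) pmf" where
  "svrg_epoch D r \<gamma> \<phi> \<alpha> M n \<theta>t =
     bind_pmf (iid_samples D n) (\<lambda>xs.
       bind_pmf (pmf_of_set {0..<M}) (\<lambda>t'.
         inner_iter D r \<gamma> \<phi> \<alpha> \<theta>t (batch_grad r \<gamma> \<phi> xs \<theta>t) t'))"

text \<open>Distribution of theta~_m; the batch size of epoch m is N m theta~_{m-1}.\<close>
fun svrg_outer :: "('s \<times> 's) pmf \<Rightarrow> ('s \<Rightarrow> 's \<Rightarrow> real) \<Rightarrow> real \<Rightarrow> ('s \<Rightarrow> real^'d) \<Rightarrow> real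
     \<Rightarrow> nat \<Rightarrow> (nat \<Rightarrow> real^'d \<Rightarrow> nat) \<Rightarrow> real^'d \<Rightarrow> nat \<Rightarrow> (real^'d) pmf" where
  "svrg_outer D r \<gamma> \<phi> \<alpha> M N \<theta>0 0 = return_pmf \<theta>0"
| "svrg_outer D r \<gamma> \<phi> \<alpha> M N \<theta>0 (Suc m) =
     bind_pmf (svrg_outer D r \<gamma> \<phi> \<alpha> M N \<theta>0 m) (\<lambda>\<theta>t.
       svrg_epoch D r \<gamma> \<phi> \<alpha> M (N (Suc m) \<theta>t) \<theta>t)"

end

theory Submission
  imports Defs
begin

text \<open>Write the TD direction as \<open>g\<^sub>\<xi>(\<theta>) = g\<^sub>\<xi>(\<theta>\<^sup>*) + H\<^sub>\<xi>(\<theta> - \<theta>\<^sup>*)\<close> with a random linear map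
  \<open>H\<^sub>\<xi>\<close> of mean \<open>-A\<close>; stationarity of \<open>\<mu>\<close> together with \<open>\<parallel>\<phi>\<parallel> \<le> 1\<close> and \<open>\<gamma> < 1\<close> gives
  \<open>E \<parallel>H\<^sub>\<xi> u\<parallel>\<^sup>2 \<le> 2 u\<^sup>T A u\<close>, while \<open>\<lambda>\<^sub>A \<parallel>u\<parallel>\<^sup>2 \<le> u\<^sup>T A u\<close> by the Rayleigh bound. With these, one
  inner SVRG step decreases \<open>E \<parallel>\<theta> - \<theta>\<^sup>*\<parallel>\<^sup>2\<close> by \<open>(11/128) f\<^sub>e(\<theta>)\<close>, up to \<open>(3/128) f\<^sub>e(\<theta>\<^sup>~)\<close>
  and a multiple of the squared error of the batch gradient. Summing over the inner loop and
  using \<open>M \<lambda>\<^sub>A = 32\<close> gives \<open>E f\<^sub>e(\<theta>\<^sup>~\<^sub>m) \<le> (7/11) E f\<^sub>e(\<theta>\<^sup>~\<^sub>m\<^sub>-\<^sub>1) + B (2/3)\<^sup>m\<close>, because the batch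
  size keeps the expected squared batch error below \<open>c \<lambda>\<^sub>A (2/3)\<^sup>m\<close>. Since \<open>7/11 < 2/3\<close>,
  this recursion decays like \<open>(2/3)\<^sup>m\<close>.\<close>

section \<open>Expectations over finitely supported distributions\<close>

lemma integral_pmf_eq_sum:
  fixes g :: "'a \<Rightarrow> real"
  assumes "finite A" "set_pmf p \<subseteq> A"
  shows "measure_pmf.expectation p g = (\<Sum>a\<in>A. pmf p a * g a)"
  using assms by (subst integral_measure_pmf_real[of A]) (auto simp: mult.commute)

lemma integral_bind_pmf_finite:
  fixes g :: "'b \<Rightarrow> real"
  assumes fin_p: "finite (set_pmf p)" and fin_N: "\<And>x. x \<in> set_pmf p \<Longrightarrow> finite (set_pmf (N x))"
  shows "measure_pmf.expectation (bind_pmf p N) g =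
         measure_pmf.expectation p (\<lambda>x. measure_pmf.expectation (N x) g)"
proof -
  define S where "S = (\<Union>x\<in>set_pmf p. set_pmf (N x))"
  have fin_S: "finite S" using fin_p fin_N by (auto simp: S_def)
  have "measure_pmf.expectation (bind_pmf p N) g = (\<Sum>y\<in>S. pmf (bind_pmf p N) y * g y)"
    by (rule integral_pmf_eq_sum[OF fin_S]) (auto simp: S_def)
  also have "\<dots> = (\<Sum>y\<in>S. (\<Sum>x\<in>set_pmf p. pmf p x * pmf (N x) y) * g y)"
    by (intro sum.cong refl, subst pmf_bind, subst integral_pmf_eq_sum[OF fin_p]) auto
  also have "\<dots> = (\<Sum>x\<in>set_pmf p. pmf p x * (\<Sum>y\<in>S. pmf (N x) y * g y))"
    by (simp add: sum_distrib_left sum_distrib_right mult.assoc) (rule sum.swap)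
  also have "\<dots> = (\<Sum>x\<in>set_pmf p. pmf p x * measure_pmf.expectation (N x) g)"
    by (intro sum.cong refl arg_cong2[where f="(*)"], subst integral_pmf_eq_sum[OF fin_S])
      (auto simp: S_def)
  also have "\<dots> = measure_pmf.expectation p (\<lambda>x. measure_pmf.expectation (N x) g)"
    by (rule integral_pmf_eq_sum[symmetric, OF fin_p]) auto
  finally show ?thesis .
qed

context
  fixes p :: "'a pmf"
  assumes fin: "finite (set_pmf p)"
begin

lemma integral_add_finite_pmf:
  "measure_pmf.expectation p (\<lambda>x. f x + g x) =
   measure_pmf.expectation p f + measure_pmf.expectation p (g :: 'a \<Rightarrow> real)"
  by (intro Bochner_Integration.integral_add integrable_measure_pmf_finite fin)

lemma integral_diff_finite_pmf:
  "measure_pmf.expectation p (\<lambda>x. f x - g x) =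
   measure_pmf.expectation p f - measure_pmf.expectation p (g :: 'a \<Rightarrow> real)"
  by (intro Bochner_Integration.integral_diff integrable_measure_pmf_finite fin)

lemma integral_mono_finite_pmf:
  "(\<And>x. x \<in> set_pmf p \<Longrightarrow> f x \<le> g x) \<Longrightarrow>
   measure_pmf.expectation p f \<le> measure_pmf.expectation p (g :: 'a \<Rightarrow> real)"
  by (intro integral_mono_AE integrable_measure_pmf_finite fin) (simp add: AE_measure_pmf_iff)

lemma integral_cong_finite_pmf:
  "(\<And>x. x \<in> set_pmf p \<Longrightarrow> f x = g x) \<Longrightarrow>
   measure_pmf.expectation p f = measure_pmf.expectation p (g :: 'a \<Rightarrow> real)"
  by (intro integral_cong_AE) (simp_all add: AE_measure_pmf_iff)

end

lemma power2_norm_add: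
  "(norm (p + q))\<^sup>2 = (norm p)\<^sup>2 + 2 * (p \<bullet> q) + (norm (q::'a::real_inner))\<^sup>2"
  by (simp add: power2_norm_eq_inner inner_add_left inner_add_right inner_commute)

lemma inner_young:
  assumes "c > 0"
  shows "2 * (p \<bullet> q) \<le> c * (norm p)\<^sup>2 + (1/c) * (norm (q::'a::real_inner))\<^sup>2"
proof -
  have "0 \<le> (norm (c *\<^sub>R p - q))\<^sup>2" by simp
  also have "\<dots> = c\<^sup>2 * (norm p)\<^sup>2 - 2 * c * (p \<bullet> q) + (norm q)\<^sup>2"
    by (simp only: power2_norm_eq_inner)
      (simp add: inner_diff_left inner_diff_right inner_commute power2_eq_square algebra_simps)
  finally have "(2 * (p \<bullet> q)) * c \<le> (c * (norm p)\<^sup>2 + (1/c) * (norm q)\<^sup>2) * c"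
    using assms by (simp add: algebra_simps power2_eq_square)
  thus ?thesis using assms by (simp add: mult_le_cancel_right)
qed

lemma power2_norm_add_le:
  "(norm (p + q))\<^sup>2 \<le> 2 * (norm p)\<^sup>2 + 2 * (norm (q::'a::real_inner))\<^sup>2"
  using inner_young[of 1 p q] by (simp add: power2_norm_add)

lemma norm_svrg_step_le:
  fixes x h k e :: "'a::real_inner"
  shows "(norm (x + (1/16) *\<^sub>R (h - k + e)))\<^sup>2 \<le> (norm x)\<^sup>2 + (1/8) * (x \<bullet> (h - k)) + (1/8) * (x \<bullet> e)
           + (3/256) * ((norm h)\<^sup>2 + (norm k)\<^sup>2 + (norm e)\<^sup>2)"
proof -
  have "(norm (x + (1/16) *\<^sub>R (h - k + e)))\<^sup>2
      = (norm x)\<^sup>2 + (1/8) * (x \<bullet> (h - k)) + (1/8) * (x \<bullet> e) + (1/256) * (norm (h - k + e))\<^sup>2"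
    unfolding power2_norm_add[of x] by (simp add: inner_add_right power_divide)
  moreover have "(norm (h - k + e))\<^sup>2 \<le> (3/2) * (norm (h - k))\<^sup>2 + 3 * (norm e)\<^sup>2"
    using inner_young[of "1/2" "h - k" e] by (simp add: power2_norm_add)
  moreover have "(norm (h - k))\<^sup>2 \<le> 2 * (norm h)\<^sup>2 + 2 * (norm k)\<^sup>2"
    using power2_norm_add_le[of h "- k"] by simp
  ultimately show ?thesis by argo
qed

lemma sum_list_map_add_const:
  "sum_list (map (\<lambda>x. f x + v) xs) = sum_list (map f xs) + real (length xs) *\<^sub>R (v :: 'a::real_vector)"
  by (induction xs) (auto simp: algebra_simps)

lemma geometric_recurrence_le:
  fixes a :: "nat \<Rightarrow> real"
  assumes "0 \<le> q" "q < p" "0 \<le> a 0" "0 \<le> B"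
    and step: "\<And>m. a (Suc m) \<le> q * a m + B * p ^ Suc m"
  shows "a m \<le> p ^ m * (a 0 + B * p / (p - q))"
proof (induction m)
  case (Suc m)
  define K where "K = B * p / (p - q)"
  have "(p - q) * K = B * p" using assms(2) by (simp add: K_def)
  moreover have "0 \<le> (p - q) * a 0" using assms(2,3) by simp
  ultimately have "q * (a 0 + K) + B * p \<le> p * (a 0 + K)" by (simp add: algebra_simps)
  hence "p ^ m * (q * (a 0 + K) + B * p) \<le> p ^ m * (p * (a 0 + K))"
    using assms(1,2) by (intro mult_left_mono) simp_all
  moreover have "q * a m \<le> q * (p ^ m * (a 0 + K))"
    using Suc assms(1) by (simp add: K_def mult_left_mono)
  ultimately show ?case
    using step[of m] by (simp add: K_def algebra_simps)
qed (use assms(1,2,4) in simp)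

lemma linear_coeff_eq_0_if_quadratic_nonneg:
  fixes a b :: real
  assumes "\<And>t. 0 \<le> a * t + b * t\<^sup>2"
  shows "a = 0"
proof (rule ccontr)
  assume "a \<noteq> 0"
  show False
  proof (cases "b > 0")
    case True
    have "a * (- a / (2 * b)) + b * (- a / (2 * b))\<^sup>2 = - a\<^sup>2 / (4 * b)"
      using True by (simp add: field_simps power2_eq_square)
    moreover have "- a\<^sup>2 / (4 * b) < 0" using True \<open>a \<noteq> 0\<close> by simp
    ultimately show False using assms[of "- a / (2 * b)"] by linarith
  next
    case False
    have "a * (- a) + b * (- a)\<^sup>2 \<le> - a\<^sup>2"
      using False by (simp add: power2_eq_square mult_nonpos_nonneg)
    moreover have "0 < a\<^sup>2" using \<open>a \<noteq> 0\<close> by simp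
    ultimately show False using assms[of "- a"] by linarith
  qed
qed

section \<open>Quadratic forms of matrices\<close>

lemma matrix_vector_mult_sum:
  "finite I \<Longrightarrow> (\<Sum>i\<in>I. M i) *v (u::real^'n) = (\<Sum>i\<in>I. M i *v u)"
  for M :: "'i \<Rightarrow> real^'n^'m"
  by (induction I rule: finite_induct) (auto simp: matrix_vector_mult_add_rdistrib)

lemma outer_prod_mult_vector: "outer_prod a b *v u = (b \<bullet> u) *\<^sub>R a"
  by (simp add: vec_eq_iff outer_prod_def matrix_vector_mult_def inner_vec_def
      sum_distrib_left algebra_simps)

lemma transpose_add: "transpose (A + B) = transpose A + transpose (B::real^'n^'m)"
  by (simp add: vec_eq_iff transpose_def)

lemma matrix_mul_matrix_inv: "invertible A \<Longrightarrow> A ** matrix_inv A = mat 1"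
  unfolding invertible_def matrix_inv_def by (rule conjunct1, rule someI_ex)

lemma inner_symmetric_matrix:
  fixes S :: "real^'n^'n"
  assumes "transpose S = S"
  shows "u \<bullet> (S *v w) = w \<bullet> (S *v u)"
proof -
  have "u \<bullet> (S *v w) = (transpose S *v u) \<bullet> w"
    by (simp add: dot_lmul_matrix)
  thus ?thesis using assms by (simp add: inner_commute)
qed

lemma finite_eigenvalues_symmetric_matrix:
  fixes S :: "real^'n^'n"
  assumes sym: "transpose S = S"
  shows "finite {l. \<exists>v. v \<noteq> 0 \<and> S *v v = l *\<^sub>R v}"
proof -
  define E where "E = {l. \<exists>v. v \<noteq> 0 \<and> S *v v = l *\<^sub>R v}"
  define V where "V = (\<lambda>l. SOME v. v \<noteq> 0 \<and> S *v v = l *\<^sub>R v)"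
  have V: "V l \<noteq> 0 \<and> S *v V l = l *\<^sub>R V l" if "l \<in> E" for l
    using someI_ex[of "\<lambda>v. v \<noteq> 0 \<and> S *v v = l *\<^sub>R v"] that by (simp add: E_def V_def)
  have orth: "V l \<bullet> V l' = 0" if "l \<in> E" "l' \<in> E" "l \<noteq> l'" for l l'
  proof -
    have "l' * (V l \<bullet> V l') = l * (V l \<bullet> V l')"
      using inner_symmetric_matrix[OF sym, of "V l" "V l'"] V[OF that(1)] V[OF that(2)]
      by (simp add: inner_commute)
    thus ?thesis using that(3) by simp
  qed
  have "inj_on V E"
    by (rule inj_onI) (use orth V in force)
  moreover have "independent (V ` E)"
    by (rule pairwise_orthogonal_independent)
      (use orth V in \<open>force simp: pairwise_def orthogonal_def\<close>)+
  ultimately show ?thesis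
    unfolding E_def[symmetric] using independent_bound finite_imageD by blast
qed

text \<open>A minimiser of the Rayleigh quotient is an eigenvector: perturbing it along the
  residual \<open>w = S v - m v\<close> changes the nonnegative excess \<open>u \<bullet> S u - m \<parallel>u\<parallel>\<^sup>2\<close>
  to first order by \<open>2 t \<parallel>w\<parallel>\<^sup>2\<close>.\<close>
lemma eigenvector_if_minimises_quadratic_form:
  fixes S :: "real^'n^'n"
  assumes sym: "transpose S = S"
    and min: "\<And>u. m * (norm u)\<^sup>2 \<le> u \<bullet> (S *v u)"
    and attained: "v \<bullet> (S *v v) = m * (norm v)\<^sup>2"
  shows "S *v v = m *\<^sub>R v"
proof -
  define w where "w = S *v v - m *\<^sub>R v"
  have quad: "(v + t *\<^sub>R w) \<bullet> (S *v (v + t *\<^sub>R w))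
      = v \<bullet> (S *v v) + 2 * t * (w \<bullet> (S *v v)) + t\<^sup>2 * (w \<bullet> (S *v w))" for t
    using inner_symmetric_matrix[OF sym, of v w]
    by (simp add: matrix_vector_right_distrib matrix_vector_mult_scaleR inner_add_left
        inner_add_right power2_eq_square algebra_simps)
  have norm: "(norm (v + t *\<^sub>R w))\<^sup>2 = (norm v)\<^sup>2 + 2 * t * (v \<bullet> w) + t\<^sup>2 * (norm w)\<^sup>2" for t
    by (simp add: power2_norm_add power_mult_distrib)
  have residual: "(norm w)\<^sup>2 = w \<bullet> (S *v v) - m * (v \<bullet> w)"
    by (simp add: w_def power2_norm_eq_inner inner_diff_left inner_diff_right inner_commute algebra_simps)
  have "0 \<le> (2 * (norm w)\<^sup>2) * t + (w \<bullet> (S *v w) - m * (norm w)\<^sup>2) * t\<^sup>2" for t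
  proof -
    have "0 \<le> (v + t *\<^sub>R w) \<bullet> (S *v (v + t *\<^sub>R w)) - m * (norm (v + t *\<^sub>R w))\<^sup>2"
      using min by simp
    also have "\<dots> = 2 * (w \<bullet> (S *v v) - m * (v \<bullet> w)) * t + (w \<bullet> (S *v w) - m * (norm w)\<^sup>2) * t\<^sup>2"
      unfolding quad norm attained by (simp add: algebra_simps)
    finally show ?thesis by (simp only: residual)
  qed
  hence "2 * (norm w)\<^sup>2 = 0" by (rule linear_coeff_eq_0_if_quadratic_nonneg)
  thus ?thesis by (simp add: w_def)
qed

lemma min_eigenvalue_le_quadratic_form:
  fixes S :: "real^'n^'n"
  assumes sym: "transpose S = S"
  shows "min_eigenvalue S * (norm u)\<^sup>2 \<le> u \<bullet> (S *v u)"
proof -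
  define q where "q u = u \<bullet> (S *v u)" for u
  obtain b :: "real^'n" where "b \<in> Basis" using nonempty_Basis by blast
  hence "sphere (0::real^'n) 1 \<noteq> {}" by (metis empty_iff mem_sphere_0 norm_Basis)
  moreover have "continuous_on (sphere 0 1) q"
    unfolding q_def by (intro continuous_intros)
  ultimately obtain v where "v \<in> sphere 0 1" and "\<forall>y \<in> sphere 0 1. q v \<le> q y"
    using continuous_attains_inf[OF compact_sphere] by blast
  hence v: "norm v = 1" and v_min: "\<And>y. norm y = 1 \<Longrightarrow> q v \<le> q y" by simp_all
  have q_scale: "q (c *\<^sub>R y) = c\<^sup>2 * q y" for c y
    by (simp add: q_def matrix_vector_mult_scaleR power2_eq_square)
  have min: "q v * (norm y)\<^sup>2 \<le> q y" for y
  proof (cases "y = 0")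
    case False
    have "q v \<le> q ((1 / norm y) *\<^sub>R y)" using False by (intro v_min) simp
    also have "\<dots> = q y / (norm y)\<^sup>2" by (simp add: q_scale power_divide)
    finally show ?thesis using False by (simp add: field_simps)
  qed (simp add: q_def)
  have "S *v v = q v *\<^sub>R v"
    by (rule eigenvector_if_minimises_quadratic_form[OF sym]) (use min v in \<open>simp_all add: q_def\<close>)
  hence "min_eigenvalue S \<le> q v"
    unfolding min_eigenvalue_def using v finite_eigenvalues_symmetric_matrix[OF sym]
    by (intro Min_le) (auto intro!: exI[of _ v])
  hence "min_eigenvalue S * (norm u)\<^sup>2 \<le> q v * (norm u)\<^sup>2" by (simp add: mult_right_mono)
  also have "\<dots> \<le> q u" by (rule min)
  finally show ?thesis by (simp add: q_def)
qed

lemma finite_set_pmf_iid_samples: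
  "finite (set_pmf D) \<Longrightarrow> finite (set_pmf (iid_samples D n))"
  by (induction n) auto

lemma length_in_iid_samples: "xs \<in> set_pmf (iid_samples D n) \<Longrightarrow> length xs = n"
  by (induction n arbitrary: xs) auto

lemma finite_set_pmf_inner_iter:
  "finite (set_pmf D) \<Longrightarrow> finite (set_pmf (inner_iter D r \<gamma> \<phi> \<alpha> \<theta>t gm t))"
  by (induction t) auto

lemma finite_set_pmf_svrg_epoch:
  "M > 0 \<Longrightarrow> finite (set_pmf D) \<Longrightarrow> finite (set_pmf (svrg_epoch D r \<gamma> \<phi> \<alpha> M n \<theta>t))"
  unfolding svrg_epoch_def
  by (auto intro!: finite_UN_I finite_set_pmf_iid_samples finite_set_pmf_inner_iter)

lemma finite_set_pmf_svrg_outer: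
  "M > 0 \<Longrightarrow> finite (set_pmf D) \<Longrightarrow> finite (set_pmf (svrg_outer D r \<gamma> \<phi> \<alpha> M N \<theta>0 m))"
  by (induction m) (auto simp: finite_set_pmf_svrg_epoch)

context
  fixes D :: "'a pmf"
  assumes fin: "finite (set_pmf D)"
begin

lemma integral_iid_samples_Suc:
  "measure_pmf.expectation (iid_samples D (Suc n)) (F :: 'a list \<Rightarrow> real) =
   measure_pmf.expectation D (\<lambda>x. measure_pmf.expectation (iid_samples D n) (\<lambda>xs. F (x # xs)))"
  by (simp only: iid_samples.simps(2), subst integral_bind_pmf_finite)
    (auto simp: fin finite_set_pmf_iid_samples)

text \<open>Mean zero is expressed through all linear functionals, which avoids
  vector-valued integrals.\<close>
lemma integral_inner_sum_iid_samples_centered: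
  fixes Z :: "'a \<Rightarrow> real^'d"
  assumes centered: "\<And>z. measure_pmf.expectation D (\<lambda>x. z \<bullet> Z x) = 0"
  shows "measure_pmf.expectation (iid_samples D n) (\<lambda>xs. z \<bullet> sum_list (map Z xs)) = 0"
proof (induction n arbitrary: z)
  case (Suc n)
  show ?case
    by (subst integral_iid_samples_Suc) (simp add: inner_add_right centered Suc
        integral_add_finite_pmf[OF finite_set_pmf_iid_samples[OF fin]])
qed simp

lemma integral_norm_sum_iid_samples_centered:
  fixes Z :: "'a \<Rightarrow> real^'d"
  assumes centered: "\<And>z. measure_pmf.expectation D (\<lambda>x. z \<bullet> Z x) = 0"
  shows "measure_pmf.expectation (iid_samples D n) (\<lambda>xs. (norm (sum_list (map Z xs)))\<^sup>2)
     = real n * measure_pmf.expectation D (\<lambda>x. (norm (Z x))\<^sup>2)"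
proof (induction n)
  case (Suc n)
  have "measure_pmf.expectation (iid_samples D (Suc n)) (\<lambda>xs. (norm (sum_list (map Z xs)))\<^sup>2)
     = measure_pmf.expectation D (\<lambda>x. (norm (Z x))\<^sup>2
          + measure_pmf.expectation (iid_samples D n) (\<lambda>xs. (norm (sum_list (map Z xs)))\<^sup>2))"
    by (subst integral_iid_samples_Suc) (simp add: power2_norm_add
        integral_add_finite_pmf[OF finite_set_pmf_iid_samples[OF fin]]
        integral_inner_sum_iid_samples_centered[OF centered])
  also have "\<dots> = real (Suc n) * measure_pmf.expectation D (\<lambda>x. (norm (Z x))\<^sup>2)"
    by (simp add: Suc integral_add_finite_pmf[OF fin] algebra_simps)
  finally show ?case .
qed simp

end

section \<open>The TD direction under the stationary distribution\<close>

locale td_setting =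
  fixes \<mu> :: "('s::finite) pmf" and P :: "'s \<Rightarrow> 's pmf"
    and \<phi> :: "'s \<Rightarrow> real^'d" and r :: "'s \<Rightarrow> 's \<Rightarrow> real" and \<gamma> :: real
  assumes stationary: "stationary_dist \<mu> P"
    and norm_\<phi>_le: "\<And>s. norm (\<phi> s) \<le> 1"
    and \<gamma>_nonneg: "0 \<le> \<gamma>" and \<gamma>_less_1: "\<gamma> < 1"
    and invertible_A: "invertible (A_e \<mu> P \<phi> \<gamma>)"
    and lambda_pos: "lambda_A \<mu> P \<phi> \<gamma> > 0"
begin

abbreviation "D \<equiv> sample_pmf \<mu> P"
abbreviation "A \<equiv> A_e \<mu> P \<phi> \<gamma>"
abbreviation "opt \<equiv> theta_star \<mu> P r \<phi> \<gamma>"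
abbreviation "lam \<equiv> lambda_A \<mu> P \<phi> \<gamma>"
abbreviation "fe \<equiv> f_e \<mu> P r \<phi> \<gamma>"
abbreviation "sg \<equiv> sigma_sq \<mu> P r \<phi> \<gamma>"
abbreviation "w s s' \<equiv> pmf \<mu> s * pmf (P s) s'"

text \<open>The TD direction is affine in \<open>\<theta>\<close>: \<open>g\<^sub>\<xi>(\<theta>) = td_noise \<xi> + td_lin \<xi> (\<theta> - \<theta>\<^sup>*)\<close>,
  where \<open>td_lin \<xi>\<close> is a random linear map with mean \<open>-A\<close>.\<close>
definition td_lin :: "'s \<times> 's \<Rightarrow> real^'d \<Rightarrow> real^'d" where
  "td_lin \<xi> u = ((\<gamma> *\<^sub>R \<phi> (snd \<xi>) - \<phi> (fst \<xi>)) \<bullet> u) *\<^sub>R \<phi> (fst \<xi>)"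

definition td_noise :: "'s \<times> 's \<Rightarrow> real^'d" where
  "td_noise \<xi> = td_g r \<gamma> \<phi> (fst \<xi>) (snd \<xi>) opt"

lemma td_lin_diff: "td_lin \<xi> (a - b) = td_lin \<xi> a - td_lin \<xi> b"
  by (simp add: td_lin_def inner_diff_right scaleR_diff_left)

lemma td_g_diff: "td_g r \<gamma> \<phi> s s' a - td_g r \<gamma> \<phi> s s' b = td_lin (s, s') (a - b)"
  by (simp add: td_g_def td_lin_def inner_diff_right inner_diff_left inner_commute algebra_simps
      scaleR_diff_left[symmetric])

lemma td_g_split: "td_g r \<gamma> \<phi> s s' a = td_noise (s, s') + td_lin (s, s') (a - opt)"
  using td_g_diff[of s s' a opt] by (simp add: td_noise_def algebra_simps)

lemma integral_sample_pmf:
  "measure_pmf.expectation D F = (\<Sum>s\<in>UNIV. \<Sum>s'\<in>UNIV. w s s' * F (s, s'))"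
proof -
  have "measure_pmf.expectation D F =
     measure_pmf.expectation \<mu> (\<lambda>s. measure_pmf.expectation (P s) (\<lambda>s'. F (s, s')))"
    unfolding sample_pmf_def by (subst integral_bind_pmf_finite) auto
  also have "\<dots> = (\<Sum>s\<in>UNIV. pmf \<mu> s * (\<Sum>s'\<in>UNIV. pmf (P s) s' * F (s, s')))"
    by (simp add: integral_pmf_eq_sum[of UNIV])
  finally show ?thesis by (simp add: sum_distrib_left mult.assoc)
qed

lemma sum_sample_weights_next_state:
  "(\<Sum>s\<in>UNIV. \<Sum>s'\<in>UNIV. w s s' * G s') = (\<Sum>s\<in>UNIV. \<Sum>s'\<in>UNIV. w s s' * G s)"
proof -
  have stat: "(\<Sum>s\<in>UNIV. w s s') = pmf \<mu> s'" for s'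
  proof -
    have "pmf \<mu> s' = pmf (bind_pmf \<mu> P) s'" using stationary by (simp add: stationary_dist_def)
    thus ?thesis by (simp add: pmf_bind integral_pmf_eq_sum[of UNIV])
  qed
  have "(\<Sum>s\<in>UNIV. \<Sum>s'\<in>UNIV. w s s' * G s') = (\<Sum>s'\<in>UNIV. pmf \<mu> s' * G s')"
    by (subst sum.swap) (simp add: sum_distrib_right[symmetric] stat)
  also have "\<dots> = (\<Sum>s\<in>UNIV. \<Sum>s'\<in>UNIV. w s s' * G s)"
    by (simp add: mult.assoc mult.commute[of "pmf (P _) _"] sum_distrib_left[symmetric]
        sum_distrib_right[symmetric] sum_pmf_eq_1)
  finally show ?thesis .
qed

lemma inner_A_mult:
  "z \<bullet> (A *v u) = (\<Sum>s\<in>UNIV. \<Sum>s'\<in>UNIV. w s s' * ((\<phi> s - \<gamma> *\<^sub>R \<phi> s') \<bullet> u) * (z \<bullet> \<phi> s))"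
  unfolding A_e_def
  by (simp add: matrix_vector_mult_sum outer_prod_mult_vector inner_sum_right
      scaleR_matrix_vector_assoc[symmetric])

lemma lambda_norm_le_quadratic_form: "lam * (norm u)\<^sup>2 \<le> u \<bullet> (A *v u)"
proof -
  define S where "S = (1/2) *\<^sub>R (A + transpose A)"
  have sym: "transpose S = S"
    by (simp add: S_def transpose_scalar transpose_add add.commute)
  have "u \<bullet> (transpose A *v u) = u \<bullet> (A *v u)"
    by (simp add: dot_lmul_matrix[symmetric] inner_commute)
  hence "u \<bullet> (S *v u) = u \<bullet> (A *v u)"
    by (simp add: S_def scaleR_matrix_vector_assoc[symmetric] matrix_vector_mult_add_rdistrib
        inner_add_right)
  thus ?thesis
    using min_eigenvalue_le_quadratic_form[OF sym, of u] by (simp add: lambda_A_def S_def)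
qed

lemma quadratic_form_nonneg: "0 \<le> u \<bullet> (A *v u)"
  using lambda_pos by (intro order_trans[OF _ lambda_norm_le_quadratic_form]) simp

lemma f_e_nonneg: "0 \<le> fe \<theta>"
  unfolding f_e_def by (rule quadratic_form_nonneg)

lemma lambda_dist_le_f_e: "lam * (norm (\<theta> - opt))\<^sup>2 \<le> fe \<theta>"
  unfolding f_e_def by (rule lambda_norm_le_quadratic_form)

lemma sigma_sq_nonneg: "0 \<le> sg"
  unfolding sigma_sq_def by (intro sum_nonneg) auto

lemma integral_inner_td_lin: "measure_pmf.expectation D (\<lambda>\<xi>. z \<bullet> td_lin \<xi> u) = - (z \<bullet> (A *v u))"
  unfolding integral_sample_pmf inner_A_mult
  by (simp add: td_lin_def sum_negf[symmetric] inner_diff_left algebra_simps)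

lemma integral_inner_td_noise: "measure_pmf.expectation D (\<lambda>\<xi>. z \<bullet> td_noise \<xi>) = 0"
proof -
  have b_e: "z \<bullet> b_e \<mu> P r \<phi> = (\<Sum>s\<in>UNIV. \<Sum>s'\<in>UNIV. w s s' * r s s' * (z \<bullet> \<phi> s))"
    by (simp add: b_e_def inner_sum_right)
  have "measure_pmf.expectation D (\<lambda>\<xi>. z \<bullet> td_noise \<xi>) = z \<bullet> b_e \<mu> P r \<phi> - z \<bullet> (A *v opt)"
    unfolding integral_sample_pmf b_e inner_A_mult
    by (simp add: td_noise_def td_g_def sum_subtractf[symmetric] inner_diff_left algebra_simps)
  also have "A *v opt = b_e \<mu> P r \<phi>"
    by (simp add: theta_star_def matrix_vector_mul_assoc matrix_mul_matrix_inv[OF invertible_A])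
  finally show ?thesis by simp
qed

lemma sigma_sq_eq: "sg = measure_pmf.expectation D (\<lambda>\<xi>. (norm (td_noise \<xi>))\<^sup>2)"
  unfolding integral_sample_pmf sigma_sq_def td_noise_def by simp

text \<open>This is where stationarity of \<open>\<mu>\<close> is used: the next state \<open>s'\<close> is again
  distributed according to \<open>\<mu>\<close>, so \<open>\<gamma>\<^sup>2 E[(\<phi>(s')\<^sup>T u)\<^sup>2] \<le> E[(\<phi>(s)\<^sup>T u)\<^sup>2]\<close>.\<close>
lemma integral_norm_td_lin_le: "measure_pmf.expectation D (\<lambda>\<xi>. (norm (td_lin \<xi> u))\<^sup>2) \<le> 2 * (u \<bullet> (A *v u))"
proof -
  define a where "a s = \<phi> s \<bullet> u" for s
  define Q where "Q = (\<Sum>s\<in>UNIV. \<Sum>s'\<in>UNIV. w s s' * (a s)\<^sup>2)"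
  define R where "R = (\<Sum>s\<in>UNIV. \<Sum>s'\<in>UNIV. w s s' * (a s * a s'))"
  have pointwise: "(norm (td_lin (s, s') u))\<^sup>2 \<le> (a s - \<gamma> * a s')\<^sup>2" for s s'
  proof -
    have "(norm (td_lin (s, s') u))\<^sup>2 = (a s - \<gamma> * a s')\<^sup>2 * (norm (\<phi> s))\<^sup>2"
      by (simp add: td_lin_def a_def power_mult_distrib inner_diff_left power2_commute)
    also have "\<dots> \<le> (a s - \<gamma> * a s')\<^sup>2"
      using norm_\<phi>_le[of s] by (intro mult_left_le) (auto simp: power_le_one)
    finally show ?thesis .
  qed
  have "measure_pmf.expectation D (\<lambda>\<xi>. (norm (td_lin \<xi> u))\<^sup>2) \<le>
        (\<Sum>s\<in>UNIV. \<Sum>s'\<in>UNIV. w s s' * (a s - \<gamma> * a s')\<^sup>2)"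
    unfolding integral_sample_pmf by (intro sum_mono mult_left_mono pointwise) auto
  also have "\<dots> = Q - 2 * \<gamma> * R + \<gamma>\<^sup>2 * (\<Sum>s\<in>UNIV. \<Sum>s'\<in>UNIV. w s s' * (a s')\<^sup>2)"
    by (simp add: Q_def R_def sum_distrib_left sum_subtractf[symmetric] sum.distrib[symmetric]
        power2_eq_square algebra_simps)
  also have "\<dots> = Q - 2 * \<gamma> * R + \<gamma>\<^sup>2 * Q"
    by (simp add: Q_def sum_sample_weights_next_state)
  also have "\<dots> \<le> 2 * (Q - \<gamma> * R)"
  proof -
    have "0 \<le> Q" unfolding Q_def by (intro sum_nonneg) auto
    moreover have "\<gamma>\<^sup>2 \<le> 1" using \<gamma>_nonneg \<gamma>_less_1 by (simp add: power_le_one)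
    ultimately have "\<gamma>\<^sup>2 * Q \<le> Q" by (simp add: mult_left_le_one_le)
    thus ?thesis by simp
  qed
  also have "Q - \<gamma> * R = u \<bullet> (A *v u)"
    unfolding inner_A_mult
    by (simp add: Q_def R_def a_def sum_distrib_left sum_subtractf[symmetric] inner_diff_left
        power2_eq_square algebra_simps inner_commute)
  finally show ?thesis .
qed

lemma integral_norm_td_lin_centered_le:
  "measure_pmf.expectation D (\<lambda>\<xi>. (norm (td_lin \<xi> u + A *v u))\<^sup>2) \<le> 2 * (u \<bullet> (A *v u))"
proof -
  have "(norm (td_lin \<xi> u + A *v u))\<^sup>2
      = (norm (td_lin \<xi> u))\<^sup>2 + 2 * ((A *v u) \<bullet> td_lin \<xi> u) + (norm (A *v u))\<^sup>2" for \<xi>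
    by (simp only: power2_norm_add inner_commute[of "td_lin \<xi> u"])
  hence "measure_pmf.expectation D (\<lambda>\<xi>. (norm (td_lin \<xi> u + A *v u))\<^sup>2) =
      measure_pmf.expectation D (\<lambda>\<xi>. (norm (td_lin \<xi> u))\<^sup>2) - (norm (A *v u))\<^sup>2"
    by (simp add: integral_add_finite_pmf integral_inner_td_lin power2_norm_eq_inner)
  thus ?thesis using integral_norm_td_lin_le[of u] zero_le_power2[of "norm (A *v u)"] by linarith
qed

lemma integral_inner_td_g_centered:
  "measure_pmf.expectation D (\<lambda>\<xi>. z \<bullet> (td_noise \<xi> + td_lin \<xi> u + A *v u)) = 0"
  by (simp add: inner_add_right integral_add_finite_pmf integral_inner_td_noise integral_inner_td_lin)

lemma integral_norm_td_g_centered_le: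
  "measure_pmf.expectation D (\<lambda>\<xi>. (norm (td_noise \<xi> + td_lin \<xi> u + A *v u))\<^sup>2)
   \<le> 4 * (u \<bullet> (A *v u)) + 2 * sg"
proof -
  have "(norm (td_noise \<xi> + td_lin \<xi> u + A *v u))\<^sup>2
      = (norm (td_noise \<xi> + td_lin \<xi> u))\<^sup>2 + 2 * ((A *v u) \<bullet> (td_noise \<xi> + td_lin \<xi> u))
        + (norm (A *v u))\<^sup>2" for \<xi>
    by (simp only: power2_norm_add inner_commute[of "td_noise \<xi> + td_lin \<xi> u"])
  hence "measure_pmf.expectation D (\<lambda>\<xi>. (norm (td_noise \<xi> + td_lin \<xi> u + A *v u))\<^sup>2)
      = measure_pmf.expectation D (\<lambda>\<xi>. (norm (td_noise \<xi> + td_lin \<xi> u))\<^sup>2) - (norm (A *v u))\<^sup>2"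
    by (simp add: inner_add_right integral_add_finite_pmf integral_inner_td_noise
        integral_inner_td_lin power2_norm_eq_inner)
  also have "\<dots> \<le> measure_pmf.expectation D (\<lambda>\<xi>. (norm (td_noise \<xi> + td_lin \<xi> u))\<^sup>2)"
    by simp
  also have "\<dots> \<le> measure_pmf.expectation D (\<lambda>\<xi>. 2 * (norm (td_noise \<xi>))\<^sup>2 + 2 * (norm (td_lin \<xi> u))\<^sup>2)"
    by (intro integral_mono_finite_pmf power2_norm_add_le) simp
  also have "\<dots> \<le> 4 * (u \<bullet> (A *v u)) + 2 * sg"
    using integral_norm_td_lin_le[of u] by (simp add: integral_add_finite_pmf sigma_sq_eq)
  finally show ?thesis .
qed

section \<open>Analysis of TD-SVRG\<close>

lemma inner_length_pos: "real M = 32 / lam \<Longrightarrow> M > 0"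
  using lambda_pos by (metis divide_pos_pos of_nat_0_less_iff zero_less_numeral)

abbreviation "err_coeff \<equiv> 1 / (4 * lam) + 3/256"

text \<open>One inner step, in coordinates \<open>x = \<theta> - \<theta>\<^sup>*\<close>, \<open>x\<^sub>0 = \<theta>\<^sub>0 - \<theta>\<^sup>*\<close>. Since the mean TD
  direction at \<open>\<theta>\<^sub>0\<close> is \<open>-A x\<^sub>0\<close>, the vector \<open>gm + A x\<^sub>0\<close> is the error of the batch
  estimate \<open>gm\<close>.\<close>
lemma integral_svrg_step_le:
  "measure_pmf.expectation D (\<lambda>\<xi>. (norm (x + (1/16) *\<^sub>R (td_lin \<xi> x - td_lin \<xi> x0 + gm)))\<^sup>2)
   \<le> (norm x)\<^sup>2 - (11/128) * (x \<bullet> (A *v x)) + (3/128) * (x0 \<bullet> (A *v x0))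
     + err_coeff * (norm (gm + A *v x0))\<^sup>2"
proof -
  define e where "e = gm + A *v x0"
  define k where "k \<xi> = td_lin \<xi> x0 + A *v x0" for \<xi>
  define fx where "fx = x \<bullet> (A *v x)"
  define f0 where "f0 = x0 \<bullet> (A *v x0)"
  have step_eq: "td_lin \<xi> x - td_lin \<xi> x0 + gm = td_lin \<xi> x - k \<xi> + e" for \<xi>
    by (simp add: k_def e_def)
  have "measure_pmf.expectation D (\<lambda>\<xi>. (norm (x + (1/16) *\<^sub>R (td_lin \<xi> x - td_lin \<xi> x0 + gm)))\<^sup>2)
      \<le> measure_pmf.expectation D (\<lambda>\<xi>. (norm x)\<^sup>2 + (1/8) * (x \<bullet> (td_lin \<xi> x - k \<xi>))
           + (1/8) * (x \<bullet> e) + (3/256) * ((norm (td_lin \<xi> x))\<^sup>2 + (norm (k \<xi>))\<^sup>2 + (norm e)\<^sup>2))"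
    unfolding step_eq by (intro integral_mono_finite_pmf norm_svrg_step_le) simp
  also have "\<dots> = (norm x)\<^sup>2 - (1/8) * fx + (1/8) * (x \<bullet> e)
      + (3/256) * (measure_pmf.expectation D (\<lambda>\<xi>. (norm (td_lin \<xi> x))\<^sup>2)
         + measure_pmf.expectation D (\<lambda>\<xi>. (norm (k \<xi>))\<^sup>2) + (norm e)\<^sup>2)"
    by (simp add: integral_add_finite_pmf integral_diff_finite_pmf inner_diff_right inner_add_right
        integral_inner_td_lin k_def fx_def)
  also have "\<dots> \<le> (norm x)\<^sup>2 - (1/8) * fx + (1/8) * (x \<bullet> e) + (3/256) * (2 * fx + 2 * f0 + (norm e)\<^sup>2)"
    using integral_norm_td_lin_le[of x] integral_norm_td_lin_centered_le[of x0]
    by (simp add: k_def fx_def f0_def)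
  also have "(1/8) * (x \<bullet> e) \<le> fx / 64 + (1 / (4 * lam)) * (norm e)\<^sup>2"
  proof -
    have "2 * (x \<bullet> e) \<le> (lam/4) * (norm x)\<^sup>2 + (1 / (lam/4)) * (norm e)\<^sup>2"
      using lambda_pos by (intro inner_young) simp
    moreover have "lam * (norm x)\<^sup>2 \<le> fx"
      unfolding fx_def by (rule lambda_norm_le_quadratic_form)
    ultimately show ?thesis by simp
  qed
  finally show ?thesis
    by (simp add: fx_def f0_def e_def algebra_simps)
qed

lemma svrg_update_minus_opt:
  "(case \<xi> of (s, s') \<Rightarrow> \<theta> + \<alpha> *\<^sub>R (td_g r \<gamma> \<phi> s s' \<theta> - td_g r \<gamma> \<phi> s s' \<theta>0 + gm)) - opt
   = (\<theta> - opt) + \<alpha> *\<^sub>R (td_lin \<xi> (\<theta> - opt) - td_lin \<xi> (\<theta>0 - opt) + gm)"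
proof -
  have "td_lin \<xi> (\<theta> - \<theta>0) = td_lin \<xi> ((\<theta> - opt) - (\<theta>0 - opt))" by simp
  thus ?thesis by (cases \<xi>) (simp add: td_g_diff td_lin_diff)
qed

lemma integral_inner_iter_Suc_le:
  "measure_pmf.expectation (inner_iter D r \<gamma> \<phi> (1/16) \<theta>0 gm (Suc t)) (\<lambda>\<theta>. (norm (\<theta> - opt))\<^sup>2)
   \<le> measure_pmf.expectation (inner_iter D r \<gamma> \<phi> (1/16) \<theta>0 gm t) (\<lambda>\<theta>. (norm (\<theta> - opt))\<^sup>2)
     - (11/128) * measure_pmf.expectation (inner_iter D r \<gamma> \<phi> (1/16) \<theta>0 gm t) fe
     + ((3/128) * fe \<theta>0 + err_coeff * (norm (gm + A *v (\<theta>0 - opt)))\<^sup>2)"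
proof -
  let ?p = "inner_iter D r \<gamma> \<phi> (1/16) \<theta>0 gm t"
  have fin: "finite (set_pmf ?p)" by (rule finite_set_pmf_inner_iter) simp
  have "measure_pmf.expectation (inner_iter D r \<gamma> \<phi> (1/16) \<theta>0 gm (Suc t)) (\<lambda>\<theta>. (norm (\<theta> - opt))\<^sup>2)
     = measure_pmf.expectation ?p (\<lambda>\<theta>. measure_pmf.expectation D (\<lambda>\<xi>.
          (norm ((\<theta> - opt) + (1/16) *\<^sub>R (td_lin \<xi> (\<theta> - opt) - td_lin \<xi> (\<theta>0 - opt) + gm)))\<^sup>2))"
    by (simp only: inner_iter.simps(2), subst integral_bind_pmf_finite)
      (auto simp: fin svrg_update_minus_opt)
  also have "\<dots> \<le> measure_pmf.expectation ?p (\<lambda>\<theta>. (norm (\<theta> - opt))\<^sup>2 - (11/128) * fe \<theta>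
        + ((3/128) * fe \<theta>0 + err_coeff * (norm (gm + A *v (\<theta>0 - opt)))\<^sup>2))"
    by (intro integral_mono_finite_pmf[OF fin] order_trans[OF integral_svrg_step_le])
      (simp add: f_e_def)
  also have "\<dots> = measure_pmf.expectation ?p (\<lambda>\<theta>. (norm (\<theta> - opt))\<^sup>2)
     - (11/128) * measure_pmf.expectation ?p fe
     + ((3/128) * fe \<theta>0 + err_coeff * (norm (gm + A *v (\<theta>0 - opt)))\<^sup>2)"
    by (simp add: integral_add_finite_pmf[OF fin] integral_diff_finite_pmf[OF fin])
  finally show ?thesis .
qed

lemma sum_integral_inner_iter_le:
  "(11/128) * (\<Sum>t<n. measure_pmf.expectation (inner_iter D r \<gamma> \<phi> (1/16) \<theta>0 gm t) fe)
   \<le> (norm (\<theta>0 - opt))\<^sup>2 + real n * ((3/128) * fe \<theta>0 + err_coeff * (norm (gm + A *v (\<theta>0 - opt)))\<^sup>2)"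
proof -
  define C where "C = (3/128) * fe \<theta>0 + err_coeff * (norm (gm + A *v (\<theta>0 - opt)))\<^sup>2"
  define d where "d t = measure_pmf.expectation (inner_iter D r \<gamma> \<phi> (1/16) \<theta>0 gm t) (\<lambda>\<theta>. (norm (\<theta> - opt))\<^sup>2)"
    for t
  define f where "f t = measure_pmf.expectation (inner_iter D r \<gamma> \<phi> (1/16) \<theta>0 gm t) fe" for t
  have "d n + (11/128) * (\<Sum>t<n. f t) \<le> (norm (\<theta>0 - opt))\<^sup>2 + real n * C"
  proof (induction n)
    case (Suc n)
    have "d (Suc n) \<le> d n - (11/128) * f n + C"
      unfolding d_def f_def C_def by (rule integral_inner_iter_Suc_le)
    with Suc show ?case by (simp add: distrib_left distrib_right)
  qed (simp add: d_def)
  moreover have "0 \<le> d n" by (simp add: d_def)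
  ultimately show ?thesis by (simp add: f_def C_def)
qed

lemma integral_epoch_output_le:
  assumes M: "real M = 32 / lam"
  shows "measure_pmf.expectation (pmf_of_set {0..<M}) (\<lambda>t.
            measure_pmf.expectation (inner_iter D r \<gamma> \<phi> (1/16) \<theta>0 gm t) fe)
     \<le> (7/11) * fe \<theta>0 + (128/11) * err_coeff * (norm (gm + A *v (\<theta>0 - opt)))\<^sup>2"
proof -
  define S where "S = (\<Sum>t<M. measure_pmf.expectation (inner_iter D r \<gamma> \<phi> (1/16) \<theta>0 gm t) fe)"
  define E where "E = err_coeff * (norm (gm + A *v (\<theta>0 - opt)))\<^sup>2"
  have M_pos: "M > 0" using M by (rule inner_length_pos)
  have "32 * (norm (\<theta>0 - opt))\<^sup>2 = real M * (lam * (norm (\<theta>0 - opt))\<^sup>2)"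
    using M lambda_pos by simp
  also have "\<dots> \<le> real M * fe \<theta>0"
    by (intro mult_left_mono lambda_dist_le_f_e) simp
  finally have "(11/128) * S \<le> real M * (fe \<theta>0 / 32) + real M * ((3/128) * fe \<theta>0 + E)"
    using sum_integral_inner_iter_le[of \<theta>0 gm M] by (simp add: S_def E_def)
  hence "S \<le> real M * ((7/11) * fe \<theta>0 + (128/11) * E)"
    by (simp add: algebra_simps)
  hence "S / real M \<le> (7/11) * fe \<theta>0 + (128/11) * E"
    using M_pos by (simp add: divide_le_eq mult.commute)
  moreover have "measure_pmf.expectation (pmf_of_set {0..<M}) (\<lambda>t.
            measure_pmf.expectation (inner_iter D r \<gamma> \<phi> (1/16) \<theta>0 gm t) fe) = S / real M"
    using M_pos by (subst integral_pmf_of_set) (auto simp: S_def atLeast0LessThan)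
  ultimately show ?thesis unfolding E_def by (simp only: mult.assoc)
qed

lemma integral_batch_grad_error_le:
  assumes "n > 0"
  shows "measure_pmf.expectation (iid_samples D n)
           (\<lambda>xs. (norm (batch_grad r \<gamma> \<phi> xs \<theta> + A *v (\<theta> - opt)))\<^sup>2)
     \<le> (4 * fe \<theta> + 2 * sg) / real n"
proof -
  define u where "u = \<theta> - opt"
  define Z where "Z \<xi> = td_noise \<xi> + td_lin \<xi> u + A *v u" for \<xi>
  have fin: "finite (set_pmf (iid_samples D n))" by (rule finite_set_pmf_iid_samples) simp
  have "batch_grad r \<gamma> \<phi> xs \<theta> + A *v u = (1 / real n) *\<^sub>R sum_list (map Z xs)"
    if "xs \<in> set_pmf (iid_samples D n)" for xs
  proof -
    have "(\<lambda>(s, s'). td_g r \<gamma> \<phi> s s' \<theta>) = (\<lambda>\<xi>. td_noise \<xi> + td_lin \<xi> u)"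
      by (auto simp: td_g_split u_def)
    thus ?thesis
      using assms length_in_iid_samples[OF that] unfolding batch_grad_def Z_def
      by (simp add: sum_list_map_add_const scaleR_add_right)
  qed
  hence "measure_pmf.expectation (iid_samples D n)
           (\<lambda>xs. (norm (batch_grad r \<gamma> \<phi> xs \<theta> + A *v u))\<^sup>2)
      = measure_pmf.expectation (iid_samples D n) (\<lambda>xs. (1 / real n)\<^sup>2 * (norm (sum_list (map Z xs)))\<^sup>2)"
    by (intro integral_cong_finite_pmf[OF fin]) (simp add: power_divide)
  also have "\<dots> = (1 / real n)\<^sup>2 * measure_pmf.expectation (iid_samples D n) (\<lambda>xs. (norm (sum_list (map Z xs)))\<^sup>2)"
    by simp
  also have "measure_pmf.expectation (iid_samples D n) (\<lambda>xs. (norm (sum_list (map Z xs)))\<^sup>2)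
      = real n * measure_pmf.expectation D (\<lambda>\<xi>. (norm (Z \<xi>))\<^sup>2)"
    by (rule integral_norm_sum_iid_samples_centered) (simp_all add: Z_def integral_inner_td_g_centered)
  also have "(1 / real n)\<^sup>2 * (real n * measure_pmf.expectation D (\<lambda>\<xi>. (norm (Z \<xi>))\<^sup>2))
      = measure_pmf.expectation D (\<lambda>\<xi>. (norm (Z \<xi>))\<^sup>2) / real n"
    using assms by (simp add: power2_eq_square)
  also have "\<dots> \<le> (4 * fe \<theta> + 2 * sg) / real n"
    unfolding Z_def f_e_def u_def by (intro divide_right_mono integral_norm_td_g_centered_le) simp
  finally show ?thesis by (simp add: u_def)
qed

text \<open>The junk value \<open>nat \<lceil>0\<rceil> = 0\<close> of the batch size only occurs when \<open>\<theta>\<close> is already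
  optimal, where the empty batch gradient \<open>0\<close> is exact.\<close>
lemma integral_batch_grad_error_le_tolerance:
  assumes "\<delta> > 0"
  shows "measure_pmf.expectation (iid_samples D (nat \<lceil>(4 * fe \<theta> + 2 * sg) / \<delta>\<rceil>))
           (\<lambda>xs. (norm (batch_grad r \<gamma> \<phi> xs \<theta> + A *v (\<theta> - opt)))\<^sup>2) \<le> \<delta>"
proof -
  define Q where "Q = 4 * fe \<theta> + 2 * sg"
  define n where "n = nat \<lceil>Q / \<delta>\<rceil>"
  have n_ge: "real n \<ge> Q / \<delta>" unfolding n_def by linarith
  show ?thesis
  proof (cases "n = 0")
    case True
    hence "Q \<le> 0" using n_ge assms by (simp add: divide_le_0_iff)
    hence "fe \<theta> = 0" using f_e_nonneg[of \<theta>] sigma_sq_nonneg by (simp add: Q_def)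
    hence "\<theta> - opt = 0"
      using lambda_dist_le_f_e[of \<theta>] lambda_pos by (simp add: mult_le_0_iff)
    thus ?thesis using True assms by (simp add: batch_grad_def Q_def n_def)
  next
    case False
    have "measure_pmf.expectation (iid_samples D n)
           (\<lambda>xs. (norm (batch_grad r \<gamma> \<phi> xs \<theta> + A *v (\<theta> - opt)))\<^sup>2) \<le> Q / real n"
      using integral_batch_grad_error_le[of n \<theta>] False by (simp add: Q_def)
    also have "\<dots> \<le> \<delta>"
      using False n_ge assms by (simp add: divide_le_eq field_simps mult.commute)
    finally show ?thesis by (simp add: Q_def n_def)
  qed
qed

lemma integral_svrg_epoch_le:
  assumes M: "real M = 32 / lam"
  shows "measure_pmf.expectation (svrg_epoch D r \<gamma> \<phi> (1/16) M n \<theta>) fe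
     \<le> (7/11) * fe \<theta> + (128/11) * err_coeff * measure_pmf.expectation (iid_samples D n)
           (\<lambda>xs. (norm (batch_grad r \<gamma> \<phi> xs \<theta> + A *v (\<theta> - opt)))\<^sup>2)"
proof -
  have M_pos: "M > 0" using M by (rule inner_length_pos)
  have fin: "finite (set_pmf (iid_samples D n))" by (rule finite_set_pmf_iid_samples) simp
  have "measure_pmf.expectation (svrg_epoch D r \<gamma> \<phi> (1/16) M n \<theta>) fe =
     measure_pmf.expectation (iid_samples D n) (\<lambda>xs. measure_pmf.expectation (pmf_of_set {0..<M})
        (\<lambda>t. measure_pmf.expectation (inner_iter D r \<gamma> \<phi> (1/16) \<theta> (batch_grad r \<gamma> \<phi> xs \<theta>) t) fe))"
    unfolding svrg_epoch_def using M_pos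
    by (simp add: integral_bind_pmf_finite fin finite_set_pmf_inner_iter)
  also have "\<dots> \<le> measure_pmf.expectation (iid_samples D n) (\<lambda>xs.
       (7/11) * fe \<theta> + (128/11) * err_coeff * (norm (batch_grad r \<gamma> \<phi> xs \<theta> + A *v (\<theta> - opt)))\<^sup>2)"
    by (intro integral_mono_finite_pmf[OF fin] integral_epoch_output_le[OF M])
  also have "\<dots> = (7/11) * fe \<theta> + (128/11) * err_coeff * measure_pmf.expectation (iid_samples D n)
       (\<lambda>xs. (norm (batch_grad r \<gamma> \<phi> xs \<theta> + A *v (\<theta> - opt)))\<^sup>2)"
    by (simp add: integral_add_finite_pmf[OF fin])
  finally show ?thesis .
qed

lemma integral_svrg_outer_Suc_le:
  assumes M: "real M = 32 / lam" and c: "c > 0"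
  defines "N \<equiv> \<lambda>m \<theta>. nat \<lceil>(4 * fe \<theta> + 2 * sg) / (c * lam * (2/3) ^ m)\<rceil>"
  shows "measure_pmf.expectation (svrg_outer D r \<gamma> \<phi> (1/16) M N \<theta>0 (Suc m)) fe
     \<le> (7/11) * measure_pmf.expectation (svrg_outer D r \<gamma> \<phi> (1/16) M N \<theta>0 m) fe
        + ((128/11) * err_coeff * (c * lam)) * (2/3) ^ Suc m"
proof -
  let ?p = "svrg_outer D r \<gamma> \<phi> (1/16) M N \<theta>0 m"
  have M_pos: "M > 0" using M by (rule inner_length_pos)
  have fin: "finite (set_pmf ?p)" by (rule finite_set_pmf_svrg_outer[OF M_pos]) simp
  have "measure_pmf.expectation (svrg_outer D r \<gamma> \<phi> (1/16) M N \<theta>0 (Suc m)) fe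
      = measure_pmf.expectation ?p (\<lambda>\<theta>. measure_pmf.expectation (svrg_epoch D r \<gamma> \<phi> (1/16) M (N (Suc m) \<theta>) \<theta>) fe)"
    by (simp only: svrg_outer.simps(2), rule integral_bind_pmf_finite[OF fin])
      (rule finite_set_pmf_svrg_epoch[OF M_pos], simp)
  also have "\<dots> \<le> measure_pmf.expectation ?p (\<lambda>\<theta>. (7/11) * fe \<theta> + (128/11) * err_coeff * (c * lam * (2/3) ^ Suc m))"
  proof (intro integral_mono_finite_pmf[OF fin] order_trans[OF integral_svrg_epoch_le[OF M]] add_left_mono mult_left_mono)
    show "measure_pmf.expectation (iid_samples D (N (Suc m) \<theta>))
            (\<lambda>xs. (norm (batch_grad r \<gamma> \<phi> xs \<theta> + A *v (\<theta> - opt)))\<^sup>2) \<le> c * lam * (2/3) ^ Suc m" for \<theta>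
      unfolding N_def using c lambda_pos by (intro integral_batch_grad_error_le_tolerance) simp
  qed (use lambda_pos in simp)
  also have "\<dots> = (7/11) * measure_pmf.expectation ?p fe + ((128/11) * err_coeff * (c * lam)) * (2/3) ^ Suc m"
    by (simp add: integral_add_finite_pmf[OF fin])
  finally show ?thesis .
qed

end

theorem theorem2:
  fixes \<mu> :: "('s::finite) pmf" and P :: "'s \<Rightarrow> 's pmf"
    and \<phi> :: "'s \<Rightarrow> real^'d" and r :: "'s \<Rightarrow> 's \<Rightarrow> real" and \<gamma> :: real
    and M :: nat and c :: real and \<theta>0 :: "real^'d"
  assumes "irreducible_chain P" and "aperiodic_chain P"
    and "stationary_dist \<mu> P"
    and "\<And>s. norm (\<phi> s) \<le> 1"
    and "0 \<le> \<gamma>" and "\<gamma> < 1"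
    and "invertible (A_e \<mu> P \<phi> \<gamma>)"
    and "lambda_A \<mu> P \<phi> \<gamma> > 0"
    and "real M = 32 / lambda_A \<mu> P \<phi> \<gamma>"
    and "c > 0"
  shows "\<exists>C1::real. \<forall>m::nat.
    measure_pmf.expectation
      (svrg_outer (sample_pmf \<mu> P) r \<gamma> \<phi> (1/16) M
         (\<lambda>m \<theta>. nat \<lceil>(4 * f_e \<mu> P r \<phi> \<gamma> \<theta> + 2 * sigma_sq \<mu> P r \<phi> \<gamma>)
                     / (c * lambda_A \<mu> P \<phi> \<gamma> * (2/3) ^ m)\<rceil>)
         \<theta>0 m)
      (f_e \<mu> P r \<phi> \<gamma>)
    \<le> (2/3) ^ m * (f_e \<mu> P r \<phi> \<gamma> \<theta>0 + C1)"
proof -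
  \<comment> \<open>With i.i.d. sampling only stationarity of \<open>\<mu>\<close> matters.\<close>
  interpret td_setting \<mu> P \<phi> r \<gamma>
    by unfold_locales (use assms in auto)
  define N where "N = (\<lambda>m \<theta>. nat \<lceil>(4 * fe \<theta> + 2 * sg) / (c * lam * (2/3) ^ m)\<rceil>)"
  define a where "a m = measure_pmf.expectation (svrg_outer D r \<gamma> \<phi> (1/16) M N \<theta>0 m) fe" for m
  define B where "B = (128/11) * err_coeff * (c * lam)"
  have "a m \<le> (2/3) ^ m * (a 0 + B * (2/3) / (2/3 - 7/11))" for m
  proof (rule geometric_recurrence_le)
    show "a (Suc m) \<le> 7/11 * a m + B * (2/3) ^ Suc m" for m
      unfolding a_def B_def N_def by (rule integral_svrg_outer_Suc_le[OF assms(9,10)])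
  qed (use lambda_pos assms(10) f_e_nonneg in \<open>simp_all add: a_def B_def\<close>)
  thus ?thesis unfolding a_def N_def by auto
qed

end
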